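(* Let $(X,d)$ be a complete metric space with $|X|\geqslant 3$ and let $T\colon X\to X$ be continuous and asymptotically regular. Suppose there exist $\alpha\in[0,\frac12)$ and a function $F\colon[0,\infty)^3\to[0,\infty)$ with $F(0,0,0)=0$ and $F$ continuous at $(0,0,0)$, such that $$d(Tx,Ty)+d(Ty,Tz)+d(Tx,Tz)\leqslant \alpha\big(d(x,y)+d(y,z)+d(z,x)\big)+F\big(d(x,Tx),d(y,Ty),d(z,Tz)\big)$$ for all pairwise distinct $x,y,z\in X$. Then $T$ has a fixed point, and $T$ has at most two fixed points.
   Context: A mapping $T\colon X\to X$ on a metric space is asymptotically regular if $\lim_{n\to\infty}d(T^{n+1}x,T^nx)=0$ for every $x\in X$. *)

theory Defs
  imports "HOL-Analysis.Analysis"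
begin

definition asymptotically_regular :: "('a::metric_space \<Rightarrow> 'a) \<Rightarrow> bool" where
  "asymptotically_regular T \<longleftrightarrow>
     (\<forall>x. (\<lambda>n. dist ((T ^^ Suc n) x) ((T ^^ n) x)) \<longlonglongrightarrow> 0)"

end

theory Submission
  imports Defs
begin

text \<open>Along an orbit \<open>x\<^sub>n = T\<^sup>n x\<^sub>0\<close> without fixed points, the contractive condition applied
  to the triple \<open>x\<^sub>n, x\<^sub>m, x\<^sub>n\<^sub>+\<^sub>1\<close> bounds \<open>(1 - 2\<alpha>) d(x\<^sub>n, x\<^sub>m)\<close> by the step lengths
  \<open>d(x\<^sub>n, x\<^sub>n\<^sub>+\<^sub>1)\<close>, \<open>d(x\<^sub>m, x\<^sub>m\<^sub>+\<^sub>1)\<close>, \<open>d(x\<^sub>n\<^sub>+\<^sub>1, x\<^sub>n\<^sub>+\<^sub>2)\<close> and the value of \<open>F\<close> at them. Asymptotic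
  regularity and continuity of \<open>F\<close> at the origin make this bound tend to \<open>0\<close>, so the orbit is
  Cauchy; its limit is a fixed point by continuity of \<open>T\<close>. Three distinct fixed points would
  violate the condition outright, since then \<open>F\<close> is evaluated at the origin and \<open>\<alpha> < 1\<close>.\<close>

lemma no_three_distinct_fixed_points:
  fixes T :: "'a::metric_space \<Rightarrow> 'a"
  assumes "\<alpha> < 1" and "F (0, 0, 0) = 0"
    and contr: "\<And>x y z. distinct [x, y, z] \<Longrightarrow>
        dist (T x) (T y) + dist (T y) (T z) + dist (T x) (T z)
          \<le> \<alpha> * (dist x y + dist y z + dist z x) + F (dist x (T x), dist y (T y), dist z (T z))"
    and "T x = x" "T y = y" "T z = z"
  shows "\<not> distinct [x, y, z]"
proof
  assume xyz: "distinct [x, y, z]"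
  define P where "P = dist x y + dist y z + dist z x"
  have "P \<le> \<alpha> * P"
    using contr[OF xyz] assms by (simp add: P_def dist_commute)
  moreover have "P > 0"
    using xyz by (simp add: P_def add_pos_nonneg)
  ultimately show False
    using \<open>\<alpha> < 1\<close> by (simp add: mult_le_cancel_right1)
qed

lemma dist_le_displacements:
  fixes T :: "'a::metric_space \<Rightarrow> 'a"
  assumes "0 \<le> \<alpha>"
    and F_nonneg: "\<And>u v w. 0 \<le> u \<Longrightarrow> 0 \<le> v \<Longrightarrow> 0 \<le> w \<Longrightarrow> 0 \<le> F (u, v, w)"
    and contr: "\<And>x y z. distinct [x, y, z] \<Longrightarrow>
        dist (T x) (T y) + dist (T y) (T z) + dist (T x) (T z)
          \<le> \<alpha> * (dist x y + dist y z + dist z x) + F (dist x (T x), dist y (T y), dist z (T z))"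
    and "T y \<noteq> y"
  shows "(1 - 2 * \<alpha>) * dist y z
    \<le> (1 + 2 * \<alpha>) * dist y (T y) + dist z (T z) + F (dist y (T y), dist z (T z), dist (T y) (T (T y)))"
    (is "_ \<le> (1 + 2 * \<alpha>) * ?dy + ?dz + ?F")
proof -
  have "0 \<le> ?F" by (simp add: F_nonneg)
  consider "z = y" | "z = T y" | "distinct [y, z, T y]"
    using \<open>T y \<noteq> y\<close> by auto
  then show ?thesis
  proof cases
    case 1
    with \<open>0 \<le> ?F\<close> \<open>0 \<le> \<alpha>\<close> show ?thesis by simp
  next
    case 2
    with \<open>0 \<le> ?F\<close> \<open>0 \<le> \<alpha>\<close> show ?thesis by (simp add: algebra_simps)
  next
    case 3
    have "dist (T y) (T z) \<le> \<alpha> * (dist y z + dist z (T y) + dist (T y) y) + ?F"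
      using contr[OF 3] zero_le_dist[of "T z" "T (T y)"] zero_le_dist[of "T y" "T (T y)"] by linarith
    moreover have "dist y z \<le> ?dy + dist (T y) (T z) + ?dz"
      using dist_triangle[of y z "T y"] dist_triangle[of "T y" z "T z"]
      by (simp add: dist_commute)
    moreover have "\<alpha> * dist z (T y) \<le> \<alpha> * (dist y z + ?dy)"
      using \<open>0 \<le> \<alpha>\<close> by (intro mult_left_mono) (simp_all add: dist_triangle3 dist_commute)
    moreover have "dist (T y) y = ?dy"
      by (rule dist_commute)
    ultimately show ?thesis
      by (simp only: distrib_left left_diff_distrib distrib_right mult_1_left)
  qed
qed

lemma Cauchy_if_dist_le_tendsto_zero:
  fixes x :: "nat \<Rightarrow> 'a::metric_space"
  assumes "(b \<longlongrightarrow> 0) (sequentially \<times>\<^sub>F sequentially)"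
    and "\<And>n m. dist (x n) (x m) \<le> b (n, m)"
  shows "Cauchy x"
proof (rule metric_CauchyI)
  fix e :: real
  assume "0 < e"
  with assms(1) have "eventually (\<lambda>p. b p < e) (sequentially \<times>\<^sub>F sequentially)"
    by (auto dest: order_tendstoD(2))
  then show "\<exists>M. \<forall>m\<ge>M. \<forall>n\<ge>M. dist (x m) (x n) < e"
    unfolding eventually_prod_sequentially
    by (metis assms(2) dist_commute order.strict_trans1)
qed

lemma tendsto_continuous_at_zero_octant:
  fixes F :: "real \<times> real \<times> real \<Rightarrow> real"
  assumes "F (0, 0, 0) = 0"
    and "continuous (at (0, 0, 0) within {p. 0 \<le> fst p \<and> 0 \<le> fst (snd p) \<and> 0 \<le> snd (snd p)}) F"
    and "(u \<longlongrightarrow> 0) G" "(v \<longlongrightarrow> 0) G" "(w \<longlongrightarrow> 0) G"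
    and "\<And>i. 0 \<le> u i" "\<And>i. 0 \<le> v i" "\<And>i. 0 \<le> w i"
  shows "((\<lambda>i. F (u i, v i, w i)) \<longlongrightarrow> 0) G"
  using continuous_within_tendsto_compose'[OF assms(2), of "\<lambda>i. (u i, v i, w i)"] assms
  by (simp add: tendsto_Pair)

lemma continuous_orbit_limit_is_fixed_point:
  fixes T :: "'a::t2_space \<Rightarrow> 'a"
  assumes "continuous_on UNIV T" and "(\<lambda>n. (T ^^ n) x) \<longlonglongrightarrow> L"
  shows "T L = L"
proof (rule LIMSEQ_unique[of "\<lambda>n. T ((T ^^ n) x)"])
  show "(\<lambda>n. T ((T ^^ n) x)) \<longlonglongrightarrow> T L"
    by (rule continuous_on_tendsto_compose[OF assms]) simp_all
  show "(\<lambda>n. T ((T ^^ n) x)) \<longlonglongrightarrow> L"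
    using LIMSEQ_Suc[OF assms(2)] by simp
qed

lemma orbit_Cauchy_if_fixed_point_free:
  fixes T :: "'a::metric_space \<Rightarrow> 'a"
  assumes asreg: "asymptotically_regular T"
    and alpha: "0 \<le> \<alpha>" "\<alpha> < 1/2"
    and F_nonneg: "\<And>u v w. 0 \<le> u \<Longrightarrow> 0 \<le> v \<Longrightarrow> 0 \<le> w \<Longrightarrow> 0 \<le> F (u, v, w)"
    and F_zero: "F (0, 0, 0) = 0"
    and F_cont: "continuous (at (0, 0, 0) within {p. 0 \<le> fst p \<and> 0 \<le> fst (snd p) \<and> 0 \<le> snd (snd p)}) F"
    and contr: "\<And>x y z. distinct [x, y, z] \<Longrightarrow>
        dist (T x) (T y) + dist (T y) (T z) + dist (T x) (T z)
          \<le> \<alpha> * (dist x y + dist y z + dist z x) + F (dist x (T x), dist y (T y), dist z (T z))"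
    and fixed_point_free: "\<And>x. T x \<noteq> x"
  shows "Cauchy (\<lambda>n. (T ^^ n) x\<^sub>0)"
proof -
  define x where "x n = (T ^^ n) x\<^sub>0" for n
  define d where "d n = dist (x n) (x (Suc n))" for n
  define b where "b = (\<lambda>(n, m). ((1 + 2 * \<alpha>) * d n + d m + F (d n, d m, d (Suc n))) / (1 - 2 * \<alpha>))"
  have x_Suc: "T (x n) = x (Suc n)" for n
    by (simp add: x_def)
  have "dist (x n) (x m) \<le> b (n, m)" for n m
    using dist_le_displacements[OF alpha(1) F_nonneg contr fixed_point_free, of "x n" "x m"] alpha(2)
    by (simp add: b_def d_def x_Suc pos_le_divide_eq mult.commute)
  moreover have "(b \<longlongrightarrow> 0) (sequentially \<times>\<^sub>F sequentially)"
  proof -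
    have "d \<longlonglongrightarrow> 0"
      using asreg unfolding asymptotically_regular_def d_def x_def by (simp add: dist_commute)
    then have "((\<lambda>p. d (fst p)) \<longlongrightarrow> 0) (sequentially \<times>\<^sub>F sequentially)"
      and "((\<lambda>p. d (snd p)) \<longlongrightarrow> 0) (sequentially \<times>\<^sub>F sequentially)"
      and "((\<lambda>p. d (Suc (fst p))) \<longlongrightarrow> 0) (sequentially \<times>\<^sub>F sequentially)"
      using filterlim_compose[OF _ filterlim_fst] filterlim_compose[OF _ filterlim_snd]
        LIMSEQ_Suc by blast+
    then have "((\<lambda>p. F (d (fst p), d (snd p), d (Suc (fst p)))) \<longlongrightarrow> 0) (sequentially \<times>\<^sub>F sequentially)"
      by (intro tendsto_continuous_at_zero_octant[OF F_zero F_cont]) (simp_all add: d_def)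
    with alpha(2) \<open>((\<lambda>p. d (fst p)) \<longlongrightarrow> 0) _\<close> \<open>((\<lambda>p. d (snd p)) \<longlongrightarrow> 0) _\<close> show ?thesis
      unfolding b_def case_prod_beta by (auto intro!: tendsto_eq_intros)
  qed
  ultimately have "Cauchy x"
    by (intro Cauchy_if_dist_le_tendsto_zero)
  then show ?thesis
    by (simp add: x_def[abs_def])
qed

lemma fixed_point_exists:
  fixes T :: "'a::complete_space \<Rightarrow> 'a"
  assumes contT: "continuous_on UNIV T"
    and asreg: "asymptotically_regular T"
    and alpha: "0 \<le> \<alpha>" "\<alpha> < 1/2"
    and F_nonneg: "\<And>u v w. 0 \<le> u \<Longrightarrow> 0 \<le> v \<Longrightarrow> 0 \<le> w \<Longrightarrow> 0 \<le> F (u, v, w)"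
    and F_zero: "F (0, 0, 0) = 0"
    and F_cont: "continuous (at (0, 0, 0) within {p. 0 \<le> fst p \<and> 0 \<le> fst (snd p) \<and> 0 \<le> snd (snd p)}) F"
    and contr: "\<And>x y z. distinct [x, y, z] \<Longrightarrow>
        dist (T x) (T y) + dist (T y) (T z) + dist (T x) (T z)
          \<le> \<alpha> * (dist x y + dist y z + dist z x) + F (dist x (T x), dist y (T y), dist z (T z))"
  shows "\<exists>x. T x = x"
proof (rule ccontr)
  fix x\<^sub>0 :: 'a
  assume no_fixed_point: "\<nexists>x. T x = x"
  then have "Cauchy (\<lambda>n. (T ^^ n) x\<^sub>0)"
    by (intro orbit_Cauchy_if_fixed_point_free[OF asreg alpha F_nonneg F_zero F_cont contr]) auto
  then obtain L where "(\<lambda>n. (T ^^ n) x\<^sub>0) \<longlonglongrightarrow> L"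
    using Cauchy_convergent_iff convergent_def by blast
  then have "T L = L"
    by (rule continuous_orbit_limit_is_fixed_point[OF contT])
  with no_fixed_point show False
    by blast
qed

theorem theorem4p5:
  fixes T :: "'a::complete_space \<Rightarrow> 'a"
    and F :: "real \<times> real \<times> real \<Rightarrow> real"
    and \<alpha> :: real
  assumes card3: "\<exists>a b c :: 'a. distinct [a, b, c]"
    and contT: "continuous_on UNIV T"
    and asreg: "asymptotically_regular T"
    and alpha: "0 \<le> \<alpha>" "\<alpha> < 1/2"
    and F_nonneg: "\<And>u v w. 0 \<le> u \<Longrightarrow> 0 \<le> v \<Longrightarrow> 0 \<le> w \<Longrightarrow> 0 \<le> F (u, v, w)"
    and F_zero: "F (0, 0, 0) = 0"
    and F_cont: "continuous (at (0, 0, 0) within {p. 0 \<le> fst p \<and> 0 \<le> fst (snd p) \<and> 0 \<le> snd (snd p)}) F"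
    and contr: "\<And>x y z. distinct [x, y, z] \<Longrightarrow>
        dist (T x) (T y) + dist (T y) (T z) + dist (T x) (T z)
          \<le> \<alpha> * (dist x y + dist y z + dist z x) + F (dist x (T x), dist y (T y), dist z (T z))"
  shows "(\<exists>x. T x = x) \<and> (\<forall>x y z. T x = x \<and> T y = y \<and> T z = z \<longrightarrow> \<not> distinct [x, y, z])"
proof
  show "\<exists>x. T x = x"
    by (rule fixed_point_exists[OF contT asreg alpha F_nonneg F_zero F_cont contr])
  have "\<alpha> < 1"
    using alpha by simp
  then show "\<forall>x y z. T x = x \<and> T y = y \<and> T z = z \<longrightarrow> \<not> distinct [x, y, z]"
    using no_three_distinct_fixed_points[OF _ F_zero contr] by blast
qed

end
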